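(* Let $G$ be a finite simple connected graph and let $k,l$ be integers with $2\le k\le l\le |V(G)|$. Then $\kappa_k^*(G)\geq \kappa_l^*(G)$.
   Context: For $S\subseteq V(G)$ with $|S|\ge 2$, an $S$-Steiner tree of $G$ is a subtree $T$ of $G$ with $S\subseteq V(T)$ all of whose leaves belong to $S$. A family of $S$-Steiner trees $T_1,\dots,T_k$ is completely independent if for all $1\le p<q\le k$: $E(T_p)\cap E(T_q)=\emptyset$, $V(T_p)\cap V(T_q)=S$, and for any two vertices $x_1,x_2\in S$ the $(x_1,x_2)$-paths in $T_p$ and in $T_q$ are internally disjoint. $\kappa^*_G(S)$ is the maximum number of trees in a completely independent family of $S$-Steiner trees in $G$, and the generalized $k^*$-connectivity is $\kappa_k^*(G)=\min\{\kappa^*_G(S): S\subseteq V(G),\ |S|=k\}$. *)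

theory Defs
  imports Main
begin

definition simple_graph :: "'a set \<Rightarrow> 'a set set \<Rightarrow> bool" where
  "simple_graph V E \<longleftrightarrow> finite V \<and> (\<forall>e\<in>E. card e = 2 \<and> e \<subseteq> V)"

definition is_path :: "'a set set \<Rightarrow> 'a list \<Rightarrow> 'a \<Rightarrow> 'a \<Rightarrow> bool" where
  "is_path F p x y \<longleftrightarrow> p \<noteq> [] \<and> hd p = x \<and> last p = y \<and> distinct p \<and>
     (\<forall>i. Suc i < length p \<longrightarrow> {p ! i, p ! Suc i} \<in> F)"

definition internal_vertices :: "'a list \<Rightarrow> 'a set" where
  "internal_vertices p = set (butlast (tl p))"

definition graph_connected :: "'a set \<Rightarrow> 'a set set \<Rightarrow> bool" where
  "graph_connected V E \<longleftrightarrow> (\<forall>x\<in>V. \<forall>y\<in>V. \<exists>p. is_path E p x y \<and> set p \<subseteq> V)"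

definition is_cycle :: "'a set set \<Rightarrow> 'a list \<Rightarrow> bool" where
  "is_cycle F c \<longleftrightarrow> length c \<ge> 3 \<and> distinct c \<and>
     (\<forall>i. Suc i < length c \<longrightarrow> {c ! i, c ! Suc i} \<in> F) \<and> {last c, hd c} \<in> F"

definition is_tree :: "'a set \<Rightarrow> 'a set set \<Rightarrow> bool" where
  "is_tree VT ET \<longleftrightarrow> VT \<noteq> {} \<and> (\<forall>e\<in>ET. e \<subseteq> VT) \<and> graph_connected VT ET
     \<and> (\<nexists>c. is_cycle ET c)"

definition leaves :: "'a set \<Rightarrow> 'a set set \<Rightarrow> 'a set" where
  "leaves VT ET = {v \<in> VT. card {e \<in> ET. v \<in> e} = 1}"

definition steiner_tree :: "'a set \<Rightarrow> 'a set set \<Rightarrow> 'a set \<Rightarrow> 'a set \<times> 'a set set \<Rightarrow> bool" where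
  "steiner_tree V E S T \<longleftrightarrow> fst T \<subseteq> V \<and> snd T \<subseteq> E \<and> is_tree (fst T) (snd T)
     \<and> S \<subseteq> fst T \<and> leaves (fst T) (snd T) \<subseteq> S"

definition completely_independent ::
  "'a set \<Rightarrow> 'a set set \<Rightarrow> 'a set \<Rightarrow> nat \<Rightarrow> (nat \<Rightarrow> 'a set \<times> 'a set set) \<Rightarrow> bool" where
  "completely_independent V E S k T \<longleftrightarrow>
     (\<forall>i<k. steiner_tree V E S (T i)) \<and>
     (\<forall>p q. p < q \<and> q < k \<longrightarrow>
        snd (T p) \<inter> snd (T q) = {} \<and> fst (T p) \<inter> fst (T q) = S \<and>
        (\<forall>x1\<in>S. \<forall>x2\<in>S. \<forall>P Q. is_path (snd (T p)) P x1 x2 \<and> is_path (snd (T q)) Q x1 x2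
             \<longrightarrow> internal_vertices P \<inter> internal_vertices Q = {}))"

definition kappa_star_S :: "'a set \<Rightarrow> 'a set set \<Rightarrow> 'a set \<Rightarrow> nat" where
  "kappa_star_S V E S = Max {k. \<exists>T. completely_independent V E S k T}"

definition kappa_star :: "'a set \<Rightarrow> 'a set set \<Rightarrow> nat \<Rightarrow> nat" where
  "kappa_star V E k = Min {kappa_star_S V E S | S. S \<subseteq> V \<and> card S = k}"

end

(*
  Adding a vertex v to S cannot increase the number of completely independent
  Steiner trees. Given such a family for S + v, prune each tree to the union of its
  paths between vertices of S: this is again an S-Steiner tree, edge disjointness and
  internal disjointness of paths are inherited, and v survives in at most one pruned tree.
  Indeed, the pairs of S whose tree path passes through v are closed under a splitting
  rule, so if v survived in two trees both trees would route one and the same pair a, b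
  through v, making v an internal vertex of both a-b paths. Iterating from a k-set
  realising the minimum up to an l-superset gives the inequality.
*)

theory Submission
  imports Defs
begin

lemma is_path_iff_successively:
  "is_path F p x y \<longleftrightarrow> p \<noteq> [] \<and> hd p = x \<and> last p = y \<and> distinct p \<and>
     successively (\<lambda>a b. {a, b} \<in> F) p"
  unfolding is_path_def successively_conv_nth by simp

lemma is_path_singleton: "is_path F [x] x x"
  by (simp add: is_path_iff_successively)

lemma is_path_singleton_iff: "is_path F p x x \<longleftrightarrow> p = [x]"
  by (cases p) (auto simp: is_path_def split: if_splits)

lemma is_path_Cons_Cons:
  "is_path F (a # b # r) x y \<longleftrightarrow> x = a \<and> {a, b} \<in> F \<and> a \<notin> set (b # r) \<and> is_path F (b # r) b y"
  by (auto simp: is_path_iff_successively)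

lemma is_path_Cons: "is_path F r b y \<Longrightarrow> {a, b} \<in> F \<Longrightarrow> a \<notin> set r \<Longrightarrow> is_path F (a # r) a y"
  by (cases r) (auto simp: is_path_iff_successively)

lemma is_path_rev: "is_path F p x y \<Longrightarrow> is_path F (rev p) y x"
  by (simp add: is_path_iff_successively hd_rev last_rev insert_commute)

lemma is_path_mono: "F \<subseteq> F' \<Longrightarrow> is_path F p x y \<Longrightarrow> is_path F' p x y"
  unfolding is_path_def by blast

lemma is_path_prefix: "is_path F (xs @ z # ys) x y \<Longrightarrow> is_path F (xs @ [z]) x z"
  by (auto simp: is_path_iff_successively successively_append_iff hd_append split: if_splits)

lemma is_path_suffix: "is_path F (xs @ z # ys) x y \<Longrightarrow> is_path F (z # ys) z y"
  by (auto simp: is_path_iff_successively successively_append_iff)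

lemma is_path_append:
  assumes p: "is_path F p x y" and q: "is_path F q y z" and pq: "set p \<inter> set q = {y}"
  shows "is_path F (p @ tl q) x z"
proof -
  obtain q' where q': "q = y # q'"
    using q by (cases q) (auto simp: is_path_def)
  show ?thesis
    using p q pq unfolding q' by (auto simp: is_path_iff_successively successively_append_iff
        successively_Cons)
qed

lemma is_path_join:
  assumes p: "is_path F p x y" and q: "is_path F q y z"
  obtains r where "is_path F r x z" and "set r \<subseteq> set p \<union> set q"
proof -
  have "\<exists>c\<in>set p. c \<in> set q"
    using p q unfolding is_path_def by (metis hd_in_set last_in_set)
  then obtain p1 c p2 where p12: "p = p1 @ c # p2" and "c \<in> set q" and p1: "\<forall>a\<in>set p1. a \<notin> set q"
    by (rule split_list_first_propE)
  then obtain q1 q2 where q12: "q = q1 @ c # q2"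
    by (auto dest: split_list)
  have "set (p1 @ [c]) \<inter> set (c # q2) = {c}"
    using p1 q12 by auto
  then have "is_path F ((p1 @ [c]) @ tl (c # q2)) x z"
    using is_path_prefix[OF p[unfolded p12]] is_path_suffix[OF q[unfolded q12]] by (rule is_path_append[rotated 2])
  then show thesis
    by (rule that) (auto simp: p12 q12)
qed

lemma is_path_set_subset:
  assumes "is_path F p x y" and "\<forall>e\<in>F. e \<subseteq> W" and "x \<in> W"
  shows "set p \<subseteq> W"
proof
  fix u assume "u \<in> set p"
  then obtain i where i: "i < length p" "p ! i = u"
    by (metis in_set_conv_nth)
  show "u \<in> W"
  proof (cases i)
    case 0
    then show ?thesis using i assms(1,3) by (auto simp: is_path_def hd_conv_nth)
  next
    case (Suc j)
    then have "{p ! j, p ! i} \<in> F" using i assms(1) by (auto simp: is_path_def)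
    then show ?thesis using assms(2) i by auto
  qed
qed

lemma is_path_edge_at_start:
  assumes "is_path F p x y" and "x \<noteq> y"
  shows "\<exists>e\<in>F. x \<in> e"
proof -
  obtain b r where "p = x # b # r"
    using assms by (cases p rule: remdups_adj.cases) (auto simp: is_path_def)
  then show ?thesis using assms(1) by (auto simp: is_path_Cons_Cons)
qed

lemma internal_verticesI:
  assumes "is_path F p x y" and "v \<in> set p" and "v \<noteq> x" and "v \<noteq> y"
  shows "v \<in> internal_vertices p"
proof -
  obtain p' where p': "p = x # p'"
    using assms(1) by (cases p) (auto simp: is_path_def)
  with assms have "v \<in> set p'" and "p' \<noteq> []" and "last p' = y"
    by (auto simp: is_path_def)
  with assms(4) have "v \<in> set (butlast p')"
    by (cases p' rule: rev_cases) auto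
  then show ?thesis
    unfolding internal_vertices_def p' by simp
qed

lemma is_cycle_mono: "F \<subseteq> F' \<Longrightarrow> is_cycle F c \<Longrightarrow> is_cycle F' c"
  unfolding is_cycle_def by blast

lemma is_cycleI_closed_path:
  "is_path F c x y \<Longrightarrow> 3 \<le> length c \<Longrightarrow> {y, x} \<in> F \<Longrightarrow> is_cycle F c"
  unfolding is_path_def is_cycle_def by blast

lemma cycle_if_paths_diverge:
  assumes p: "is_path F p u b" and q: "is_path F q w b" and "u \<noteq> w"
    and a: "a \<notin> set p" "a \<notin> set q" "{a, u} \<in> F" "{a, w} \<in> F"
  shows "\<exists>c. is_cycle F c"
proof -
  have "\<exists>z\<in>set p. z \<in> set q"
    using p q unfolding is_path_def by (metis last_in_set)
  then obtain p1 z p2 where p12: "p = p1 @ z # p2" and "z \<in> set q" and p1: "\<forall>v\<in>set p1. v \<notin> set q"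
    by (rule split_list_first_propE)
  then obtain q1 q2 where q12: "q = q1 @ z # q2"
    by (auto dest: split_list)
  \<comment> \<open>z is the first vertex of p on q; the cycle runs from a along p to z and back along q to w.\<close>
  have "is_path F (a # p1 @ [z]) a z"
    using is_path_prefix[OF p[unfolded p12]] a p12 by (auto intro: is_path_Cons)
  moreover have "is_path F (rev (q1 @ [z])) z w"
    using is_path_rev[OF is_path_prefix[OF q[unfolded q12]]] .
  moreover have "set (a # p1 @ [z]) \<inter> set (rev (q1 @ [z])) = {z}"
    using p1 a q q12 by (auto simp: is_path_def)
  ultimately have "is_path F ((a # p1 @ [z]) @ tl (rev (q1 @ [z]))) a w"
    by (rule is_path_append)
  moreover have "3 \<le> length ((a # p1 @ [z]) @ tl (rev (q1 @ [z])))"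
    using \<open>u \<noteq> w\<close> p q p12 q12 by (cases p1; cases q1) (auto simp: is_path_def)
  ultimately show ?thesis
    using a(4) is_cycleI_closed_path by (metis insert_commute)
qed

lemma acyclic_path_unique:
  assumes "\<nexists>c. is_cycle F c"
  shows "is_path F p a b \<Longrightarrow> is_path F q a b \<Longrightarrow> p = q"
proof (induction p arbitrary: a q)
  case Nil
  then show ?case by (simp add: is_path_def)
next
  case (Cons a' p)
  show ?case
  proof (cases "a = b")
    case True
    then show ?thesis using Cons.prems by (simp add: is_path_singleton_iff)
  next
    case False
    then obtain u p' w q' where "p = u # p'" "q = a # w # q'"
      using Cons.prems by (cases p; cases q rule: remdups_adj.cases) (auto simp: is_path_def)
    then show ?thesis
      using Cons cycle_if_paths_diverge[of F "u # p'" u b "w # q'" w a] assms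
      by (auto simp: is_path_Cons_Cons)
  qed
qed

definition on_path :: "'a set set \<Rightarrow> 'a \<Rightarrow> 'a \<Rightarrow> 'a \<Rightarrow> bool" where
  "on_path F v a b \<longleftrightarrow> (\<exists>p. is_path F p a b \<and> v \<in> set p)"

lemma on_path_sym: "on_path F v a b \<Longrightarrow> on_path F v b a"
  unfolding on_path_def using is_path_rev by fastforce

lemma tree_on_path_split:
  assumes tree: "is_tree VT ET" and v: "on_path ET v x y" and "x \<in> VT" "y \<in> VT" "c \<in> VT"
  shows "on_path ET v x c \<or> on_path ET v c y"
proof -
  have conn: "graph_connected VT ET" and acyclic: "\<nexists>c. is_cycle ET c"
    using tree unfolding is_tree_def by auto
  obtain p where p: "is_path ET p x c"
    using conn assms(3,5) unfolding graph_connected_def by blast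
  obtain q where q: "is_path ET q c y"
    using conn assms(4,5) unfolding graph_connected_def by blast
  obtain r where r: "is_path ET r x y" and r_sub: "set r \<subseteq> set p \<union> set q"
    using is_path_join[OF p q] .
  obtain r' where r': "is_path ET r' x y" "v \<in> set r'"
    using v unfolding on_path_def by blast
  have "r' = r"
    using acyclic_path_unique[OF acyclic r'(1) r] .
  then have "v \<in> set p \<or> v \<in> set q"
    using r'(2) r_sub by blast
  then show ?thesis
    using p q unfolding on_path_def by blast
qed

lemma splitting_relations_share_pair:
  assumes R_sym: "\<And>a b. R a b \<Longrightarrow> R b a" and Q_sym: "\<And>a b. Q a b \<Longrightarrow> Q b a"
    and R_split: "\<And>a b c. R a b \<Longrightarrow> a \<in> S \<Longrightarrow> b \<in> S \<Longrightarrow> c \<in> S \<Longrightarrow> R a c \<or> R c b"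
    and Q_split: "\<And>a b c. Q a b \<Longrightarrow> a \<in> S \<Longrightarrow> b \<in> S \<Longrightarrow> c \<in> S \<Longrightarrow> Q a c \<or> Q c b"
    and R: "R x y" and Q: "Q x' y'" and S: "x \<in> S" "y \<in> S" "x' \<in> S" "y' \<in> S"
  shows "\<exists>a\<in>S. \<exists>b\<in>S. R a b \<and> Q a b"
proof -
  obtain s where s: "s \<in> S" "R s x'"
  proof -
    from R_split[OF R S(1-3)] consider "R x x'" | "R x' y" by blast
    then show thesis
    proof cases
      case 1
      then show thesis using that S(1) by blast
    next
      case 2
      then show thesis using that S(2) R_sym by blast
    qed
  qed
  from Q_split[OF Q S(3,4) s(1)] consider "Q x' s" | "Q s y'" by blast
  then show ?thesis
  proof cases
    case 1
    then show ?thesis using s R_sym S(3) by blast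
  next
    case 2
    from R_split[OF s(2) s(1) S(3,4)] consider "R s y'" | "R y' x'" by blast
    then show ?thesis
    proof cases
      case 1
      then show ?thesis using 2 s(1) S(4) by blast
    next
      case 2
      then show ?thesis using Q S(3,4) R_sym by blast
    qed
  qed
qed

lemma graph_connectedI_via_hub:
  assumes to_hub: "\<And>u. u \<in> W \<Longrightarrow> \<exists>s\<in>S. \<exists>p. is_path F p u s \<and> set p \<subseteq> W"
    and hub: "\<And>s t. s \<in> S \<Longrightarrow> t \<in> S \<Longrightarrow> \<exists>p. is_path F p s t \<and> set p \<subseteq> W"
  shows "graph_connected W F"
  unfolding graph_connected_def
proof (intro ballI)
  fix u w assume "u \<in> W" "w \<in> W"
  obtain s p where "s \<in> S" and p: "is_path F p u s" "set p \<subseteq> W"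
    using to_hub[OF \<open>u \<in> W\<close>] by blast
  obtain t q where "t \<in> S" and q: "is_path F q w t" "set q \<subseteq> W"
    using to_hub[OF \<open>w \<in> W\<close>] by blast
  obtain m where m: "is_path F m s t" "set m \<subseteq> W"
    using hub[OF \<open>s \<in> S\<close> \<open>t \<in> S\<close>] by blast
  obtain r where r: "is_path F r u t" "set r \<subseteq> set p \<union> set m"
    using is_path_join[OF p(1) m(1)] .
  obtain r' where r': "is_path F r' u w" "set r' \<subseteq> set r \<union> set (rev q)"
    using is_path_join[OF r(1) is_path_rev[OF q(1)]] .
  have "set r' \<subseteq> W"
  proof
    fix x assume x: "x \<in> set r'"
    show "x \<in> W"
      using subsetD[OF r'(2) x] subsetD[OF r(2)] p(2) m(2) q(2) by auto
  qed
  with r'(1) show "\<exists>p. is_path F p u w \<and> set p \<subseteq> W"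
    by blast
qed

definition path_edges :: "'a list \<Rightarrow> 'a set set" where
  "path_edges p = {{p ! i, p ! Suc i} | i. Suc i < length p}"

lemma path_edges_subset: "is_path F p x y \<Longrightarrow> path_edges p \<subseteq> F"
  unfolding is_path_def path_edges_def by auto

lemma is_path_path_edges: "is_path F p x y \<Longrightarrow> is_path (path_edges p) p x y"
  unfolding is_path_def path_edges_def by auto

lemma path_edges_subset_set: "e \<in> path_edges p \<Longrightarrow> e \<subseteq> set p"
  unfolding path_edges_def by auto

lemma interior_vertex_two_path_edges:
  assumes p: "is_path F p x y" and "u \<in> set p" "u \<noteq> x" "u \<noteq> y"
  obtains e1 e2 where "e1 \<in> path_edges p" "e2 \<in> path_edges p" "u \<in> e1" "u \<in> e2" "e1 \<noteq> e2"
proof -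
  obtain i where i: "i < length p" "p ! i = u"
    using assms(2) by (metis in_set_conv_nth)
  have "i \<noteq> 0"
    using p i(2) assms(3) unfolding is_path_def by (metis hd_conv_nth)
  moreover have "Suc i \<noteq> length p"
    using p i(2) assms(4) unfolding is_path_def by (metis diff_Suc_1 last_conv_nth)
  ultimately obtain j where j: "i = Suc j" "Suc i < length p"
    using i(1) by (metis Suc_lessI not0_implies_Suc)
  have "p ! j \<noteq> p ! Suc i" "p ! j \<noteq> u"
    using p i j by (auto simp: is_path_def nth_eq_iff_index_eq)
  moreover have "{p ! j, p ! i} \<in> path_edges p" "{p ! i, p ! Suc i} \<in> path_edges p"
    unfolding path_edges_def using j by auto
  ultimately show thesis
    using i(2) by (intro that[of "{p ! j, p ! i}" "{p ! i, p ! Suc i}"]) auto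
qed

definition paths_between :: "'a set set \<Rightarrow> 'a set \<Rightarrow> 'a list set" where
  "paths_between F S = {p. \<exists>x\<in>S. \<exists>y\<in>S. is_path F p x y}"

text \<open>For a tree containing S this is the smallest subtree spanning S.\<close>

definition prune :: "'a set \<Rightarrow> 'a set \<times> 'a set set \<Rightarrow> 'a set \<times> 'a set set" where
  "prune S T = (\<Union>p\<in>paths_between (snd T) S. set p, \<Union>p\<in>paths_between (snd T) S. path_edges p)"

lemma mem_prune_vertices_iff:
  "v \<in> fst (prune S T) \<longleftrightarrow> (\<exists>x\<in>S. \<exists>y\<in>S. on_path (snd T) v x y)"
  unfolding prune_def paths_between_def on_path_def by auto

lemma prune_edges_subset: "snd (prune S T) \<subseteq> snd T"
  unfolding prune_def paths_between_def by (auto dest: path_edges_subset)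

lemma prune_vertices_subset:
  assumes "\<forall>e\<in>snd T. e \<subseteq> fst T" and "S \<subseteq> fst T"
  shows "fst (prune S T) \<subseteq> fst T"
  using assms unfolding prune_def paths_between_def by (auto dest: is_path_set_subset)

lemma subset_prune_vertices: "S \<subseteq> fst (prune S T)"
proof
  fix x assume "x \<in> S"
  then have "[x] \<in> paths_between (snd T) S"
    unfolding paths_between_def using is_path_singleton[of "snd T" x] by blast
  then show "x \<in> fst (prune S T)"
    unfolding prune_def fst_conv by (rule UN_I) simp
qed

lemma prune_edges_within: "\<forall>e\<in>snd (prune S T). e \<subseteq> fst (prune S T)"
  unfolding prune_def by (auto dest: path_edges_subset_set)

lemma is_path_prune:
  assumes "x \<in> S" "y \<in> S" "is_path (snd T) p x y"
  shows "is_path (snd (prune S T)) p x y" and "set p \<subseteq> fst (prune S T)"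
proof -
  have "p \<in> paths_between (snd T) S"
    using assms unfolding paths_between_def by blast
  then have "path_edges p \<subseteq> snd (prune S T)" and "set p \<subseteq> fst (prune S T)"
    unfolding prune_def by auto
  then show "is_path (snd (prune S T)) p x y" and "set p \<subseteq> fst (prune S T)"
    using is_path_mono[OF _ is_path_path_edges[OF assms(3)]] by auto
qed

lemma prune_connected:
  assumes conn: "graph_connected (fst T) (snd T)" and S: "S \<subseteq> fst T"
  shows "graph_connected (fst (prune S T)) (snd (prune S T))"
proof (rule graph_connectedI_via_hub)
  fix u assume "u \<in> fst (prune S T)"
  then obtain x y p where "x \<in> S" "y \<in> S" and p: "is_path (snd T) p x y" "u \<in> set p"
    unfolding prune_def paths_between_def by auto
  then obtain p1 p2 where p12: "p = p1 @ u # p2"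
    by (auto dest: split_list)
  have "is_path (snd (prune S T)) (u # p2) u y" "set (u # p2) \<subseteq> fst (prune S T)"
    using is_path_prune[OF \<open>x \<in> S\<close> \<open>y \<in> S\<close> p(1)] is_path_suffix unfolding p12 by auto
  then show "\<exists>s\<in>S. \<exists>p. is_path (snd (prune S T)) p u s \<and> set p \<subseteq> fst (prune S T)"
    using \<open>y \<in> S\<close> by blast
next
  fix s t assume "s \<in> S" "t \<in> S"
  then obtain p where "is_path (snd T) p s t"
    using conn S unfolding graph_connected_def by blast
  then show "\<exists>p. is_path (snd (prune S T)) p s t \<and> set p \<subseteq> fst (prune S T)"
    using is_path_prune[OF \<open>s \<in> S\<close> \<open>t \<in> S\<close>] by blast
qed

lemma prune_leaves_subset: "leaves (fst (prune S T)) (snd (prune S T)) \<subseteq> S"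
proof
  fix u assume u: "u \<in> leaves (fst (prune S T)) (snd (prune S T))"
  show "u \<in> S"
  proof (rule ccontr)
    assume "u \<notin> S"
    obtain x y p where "x \<in> S" "y \<in> S" and p: "is_path (snd T) p x y" "u \<in> set p"
      using u unfolding leaves_def prune_def paths_between_def by auto
    then have "u \<noteq> x" "u \<noteq> y"
      using \<open>u \<notin> S\<close> by auto
    then obtain e1 e2 where e: "e1 \<in> path_edges p" "e2 \<in> path_edges p" "u \<in> e1" "u \<in> e2" "e1 \<noteq> e2"
      by (rule interior_vertex_two_path_edges[OF p])
    have "path_edges p \<subseteq> snd (prune S T)"
      using \<open>x \<in> S\<close> \<open>y \<in> S\<close> p(1) unfolding prune_def paths_between_def by auto
    then have "{e1, e2} \<subseteq> {e \<in> snd (prune S T). u \<in> e}"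
      using e by auto
    moreover have "card {e \<in> snd (prune S T). u \<in> e} = 1"
      using u unfolding leaves_def by simp
    ultimately show False
      using \<open>e1 \<noteq> e2\<close> by (metis card_1_singletonE insert_subset singletonD)
  qed
qed

lemma steiner_tree_prune:
  assumes T: "steiner_tree V E S' T" and "S \<subseteq> S'" and "S \<noteq> {}"
  shows "steiner_tree V E S (prune S T)"
proof -
  have "is_tree (fst T) (snd T)" and S: "S \<subseteq> fst T"
    using T assms(2) unfolding steiner_tree_def by auto
  then have edges: "\<forall>e\<in>snd T. e \<subseteq> fst T" and conn: "graph_connected (fst T) (snd T)"
    and acyclic: "\<nexists>c. is_cycle (snd T) c"
    unfolding is_tree_def by auto
  have "fst (prune S T) \<noteq> {}"
    using assms(3) subset_prune_vertices[of S T] by blast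
  moreover have "\<nexists>c. is_cycle (snd (prune S T)) c"
    using acyclic is_cycle_mono[OF prune_edges_subset[of S T]] by blast
  ultimately have "is_tree (fst (prune S T)) (snd (prune S T))"
    using prune_edges_within[of S T] prune_connected[OF conn S] unfolding is_tree_def by blast
  moreover have "fst (prune S T) \<subseteq> V"
    using prune_vertices_subset[OF edges S] T unfolding steiner_tree_def by blast
  moreover have "snd (prune S T) \<subseteq> E"
    using prune_edges_subset[of S T] T unfolding steiner_tree_def by blast
  ultimately show ?thesis
    using subset_prune_vertices[of S T] prune_leaves_subset[of S T]
    unfolding steiner_tree_def by blast
qed

lemma completely_independentD:
  assumes ci: "completely_independent V E S k T" and "p < k" "q < k" "p \<noteq> q"
  shows "snd (T p) \<inter> snd (T q) = {}" and "fst (T p) \<inter> fst (T q) = S"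
    and "x1 \<in> S \<Longrightarrow> x2 \<in> S \<Longrightarrow> is_path (snd (T p)) P x1 x2 \<Longrightarrow> is_path (snd (T q)) Q x1 x2
      \<Longrightarrow> internal_vertices P \<inter> internal_vertices Q = {}"
proof -
  have D: "snd (T i) \<inter> snd (T j) = {}" "fst (T i) \<inter> fst (T j) = S"
    "\<And>x1 x2 P Q. x1 \<in> S \<Longrightarrow> x2 \<in> S \<Longrightarrow> is_path (snd (T i)) P x1 x2 \<Longrightarrow> is_path (snd (T j)) Q x1 x2
      \<Longrightarrow> internal_vertices P \<inter> internal_vertices Q = {}"
    if "i < j" "j < k" for i j
    using ci[unfolded completely_independent_def, THEN conjunct2, rule_format, OF conjI[OF that]]
    by blast+
  show "snd (T p) \<inter> snd (T q) = {}"
    using D(1)[of p q] D(1)[of q p] assms(2-4) by (metis Int_commute linorder_neqE_nat)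
  show "fst (T p) \<inter> fst (T q) = S"
    using D(2)[of p q] D(2)[of q p] assms(2-4) by (metis Int_commute linorder_neqE_nat)
  show "internal_vertices P \<inter> internal_vertices Q = {}"
    if "x1 \<in> S" "x2 \<in> S" "is_path (snd (T p)) P x1 x2" "is_path (snd (T q)) Q x1 x2"
    using D(3)[of p q x1 x2 P Q] D(3)[of q p x1 x2 Q P] that assms(2-4)
    by (metis Int_commute linorder_neqE_nat)
qed

lemma completely_independent_steiner_tree:
  "completely_independent V E S k T \<Longrightarrow> i < k \<Longrightarrow> steiner_tree V E S (T i)"
  unfolding completely_independent_def by blast

lemma pruned_trees_avoid_removed_vertex:
  assumes ci: "completely_independent V E (insert v S) m T" and "v \<notin> S"
    and pq: "p < m" "q < m" "p \<noteq> q"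
  shows "v \<notin> fst (prune S (T p)) \<inter> fst (prune S (T q))"
proof
  assume v: "v \<in> fst (prune S (T p)) \<inter> fst (prune S (T q))"
  obtain x y where xy: "x \<in> S" "y \<in> S" "on_path (snd (T p)) v x y"
    using IntD1[OF v] unfolding mem_prune_vertices_iff by blast
  obtain x' y' where xy': "x' \<in> S" "y' \<in> S" "on_path (snd (T q)) v x' y'"
    using IntD2[OF v] unfolding mem_prune_vertices_iff by blast
  have split: "on_path (snd (T i)) v a c \<or> on_path (snd (T i)) v c b"
    if "i < m" "on_path (snd (T i)) v a b" "a \<in> S" "b \<in> S" "c \<in> S" for i a b c
  proof -
    have "is_tree (fst (T i)) (snd (T i))" "S \<subseteq> fst (T i)"
      using completely_independent_steiner_tree[OF ci \<open>i < m\<close>] unfolding steiner_tree_def by auto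
    then show ?thesis
      using tree_on_path_split that(2-5) by (meson subsetD)
  qed
  obtain a b where "a \<in> S" "b \<in> S" "on_path (snd (T p)) v a b" "on_path (snd (T q)) v a b"
    using splitting_relations_share_pair[of "on_path (snd (T p)) v" "on_path (snd (T q)) v" S,
        OF on_path_sym on_path_sym split[OF pq(1)] split[OF pq(2)] xy(3) xy'(3) xy(1,2) xy'(1,2)]
    by blast
  then obtain P Q where P: "is_path (snd (T p)) P a b" "v \<in> set P"
    and Q: "is_path (snd (T q)) Q a b" "v \<in> set Q"
    unfolding on_path_def by blast
  have "v \<noteq> a" "v \<noteq> b"
    using \<open>a \<in> S\<close> \<open>b \<in> S\<close> \<open>v \<notin> S\<close> by auto
  then have "v \<in> internal_vertices P \<inter> internal_vertices Q"
    using internal_verticesI[OF P] internal_verticesI[OF Q] by blast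
  moreover have "internal_vertices P \<inter> internal_vertices Q = {}"
    using completely_independentD(3)[OF ci pq _ _ P(1) Q(1)] \<open>a \<in> S\<close> \<open>b \<in> S\<close> by blast
  ultimately show False
    by blast
qed

lemma completely_independent_prune:
  assumes ci: "completely_independent V E (insert v S) m T" and "v \<notin> S" and "S \<noteq> {}"
  shows "completely_independent V E S m (\<lambda>i. prune S (T i))"
proof -
  have tree: "steiner_tree V E (insert v S) (T i)" if "i < m" for i
    using completely_independent_steiner_tree[OF ci that] .
  have vertices: "S \<subseteq> fst (prune S (T i))" "fst (prune S (T i)) \<subseteq> fst (T i)" if "i < m" for i
    using subset_prune_vertices[of S "T i"] prune_vertices_subset[of "T i" S] tree[OF that]
    unfolding steiner_tree_def is_tree_def by auto
  have "\<forall>i<m. steiner_tree V E S (prune S (T i))"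
    using steiner_tree_prune[OF tree _ \<open>S \<noteq> {}\<close>] by blast
  moreover have "\<forall>p q. p < q \<and> q < m \<longrightarrow>
      snd (prune S (T p)) \<inter> snd (prune S (T q)) = {}
      \<and> fst (prune S (T p)) \<inter> fst (prune S (T q)) = S
      \<and> (\<forall>x1\<in>S. \<forall>x2\<in>S. \<forall>P Q. is_path (snd (prune S (T p))) P x1 x2 \<and> is_path (snd (prune S (T q))) Q x1 x2
          \<longrightarrow> internal_vertices P \<inter> internal_vertices Q = {})"
  proof (intro allI impI conjI ballI)
    fix p q assume "p < q \<and> q < m"
    then have pq: "p < m" "q < m" "p \<noteq> q"
      by auto
    show "snd (prune S (T p)) \<inter> snd (prune S (T q)) = {}"
      using completely_independentD(1)[OF ci pq] prune_edges_subset[of S "T p"]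
        prune_edges_subset[of S "T q"] by blast
    show "fst (prune S (T p)) \<inter> fst (prune S (T q)) = S"
      using completely_independentD(2)[OF ci pq] pruned_trees_avoid_removed_vertex[OF ci \<open>v \<notin> S\<close> pq]
        vertices[OF pq(1)] vertices[OF pq(2)] by auto
    fix x1 x2 P Q
    assume "x1 \<in> S" "x2 \<in> S"
      and paths: "is_path (snd (prune S (T p))) P x1 x2 \<and> is_path (snd (prune S (T q))) Q x1 x2"
    have "is_path (snd (T p)) P x1 x2" "is_path (snd (T q)) Q x1 x2"
      using paths is_path_mono[OF prune_edges_subset[of S "T p"]]
        is_path_mono[OF prune_edges_subset[of S "T q"]] by auto
    then show "internal_vertices P \<inter> internal_vertices Q = {}"
      using completely_independentD(3)[OF ci pq] \<open>x1 \<in> S\<close> \<open>x2 \<in> S\<close> by blast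
  qed
  ultimately show ?thesis
    unfolding completely_independent_def by (rule conjI)
qed

lemma steiner_tree_has_edge:
  assumes "steiner_tree V E S T" and "x \<in> S" "y \<in> S" "x \<noteq> y"
  shows "snd T \<noteq> {}"
proof -
  have "graph_connected (fst T) (snd T)" and "x \<in> fst T" "y \<in> fst T"
    using assms unfolding steiner_tree_def is_tree_def by auto
  then obtain p where "is_path (snd T) p x y"
    unfolding graph_connected_def by blast
  from is_path_edge_at_start[OF this \<open>x \<noteq> y\<close>] show ?thesis
    by blast
qed

lemma completely_independent_le_card_edges:
  assumes "simple_graph V E" and "x \<in> S" "y \<in> S" "x \<noteq> y"
    and ci: "completely_independent V E S k T"
  shows "k \<le> card E"
proof -
  have "finite E"
    using assms(1) finite_Pow_iff[of V] finite_subset[of E "Pow V"] unfolding simple_graph_def by blast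
  define edge where "edge i = (SOME e. e \<in> snd (T i))" for i
  have edge: "edge i \<in> snd (T i)" "snd (T i) \<subseteq> E" if "i < k" for i
    using steiner_tree_has_edge[OF completely_independent_steiner_tree[OF ci that] assms(2-4)]
      completely_independent_steiner_tree[OF ci that]
    unfolding edge_def steiner_tree_def by (auto simp: some_in_eq)
  have "inj_on edge {..<k}"
  proof (rule inj_onI)
    fix i j assume "i \<in> {..<k}" "j \<in> {..<k}" "edge i = edge j"
    then show "i = j"
      using edge(1)[of i] edge(1)[of j] completely_independentD(1)[OF ci, of i j] by auto
  qed
  moreover have "edge ` {..<k} \<subseteq> E"
    using edge by blast
  ultimately show ?thesis
    using card_inj_on_le[OF _ _ \<open>finite E\<close>, of edge "{..<k}"] by simp
qed

lemma finite_completely_independent_sizes: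
  assumes "simple_graph V E" and "x \<in> S" "y \<in> S" "x \<noteq> y"
  shows "finite {k. \<exists>T. completely_independent V E S k T}"
proof (rule finite_subset)
  show "{k. \<exists>T. completely_independent V E S k T} \<subseteq> {..card E}"
    using completely_independent_le_card_edges[OF assms] by blast
qed simp

lemma kappa_star_S_insert_le:
  assumes "simple_graph V E" and "x \<in> S" "y \<in> S" "x \<noteq> y"
  shows "kappa_star_S V E (insert v S) \<le> kappa_star_S V E S"
proof (cases "v \<in> S")
  case True
  then show ?thesis by (simp add: insert_absorb)
next
  case False
  let ?K = "\<lambda>S. {k. \<exists>T. completely_independent V E S k T}"
  have "finite (?K (insert v S))"
    using finite_completely_independent_sizes[OF assms(1) insertI2[OF assms(2)] insertI2[OF assms(3)] assms(4)] .
  moreover have "?K (insert v S) \<noteq> {}"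
    unfolding completely_independent_def by auto
  ultimately have "kappa_star_S V E (insert v S) \<in> ?K (insert v S)"
    unfolding kappa_star_S_def by (rule Max_in)
  then obtain T where "completely_independent V E (insert v S) (kappa_star_S V E (insert v S)) T"
    by blast
  from completely_independent_prune[OF this False] have "kappa_star_S V E (insert v S) \<in> ?K S"
    using assms(2) by blast
  from Max_ge[OF finite_completely_independent_sizes[OF assms] this] show ?thesis
    unfolding kappa_star_S_def .
qed

lemma kappa_star_S_antimono:
  assumes "simple_graph V E" and "x \<in> S" "y \<in> S" "x \<noteq> y" and "S \<subseteq> S'" "finite S'"
  shows "kappa_star_S V E S' \<le> kappa_star_S V E S"
proof -
  have "kappa_star_S V E (D \<union> S) \<le> kappa_star_S V E S" if "finite D" for D
    using that
  proof (induction D rule: finite_induct)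
    case (insert v D)
    have "kappa_star_S V E (insert v (D \<union> S)) \<le> kappa_star_S V E (D \<union> S)"
      using kappa_star_S_insert_le[OF assms(1), of x "D \<union> S" y v] assms(2-4) by blast
    then show ?case
      using insert.IH by simp
  qed simp
  from this[of "S' - S"] show ?thesis
    using assms(5,6) by (simp add: Un_absorb2)
qed

lemma finite_kappa_star_S_values:
  assumes "finite V"
  shows "finite {kappa_star_S V E S | S. S \<subseteq> V \<and> card S = k}"
proof (rule finite_subset)
  show "{kappa_star_S V E S | S. S \<subseteq> V \<and> card S = k} \<subseteq> kappa_star_S V E ` Pow V"
    by blast
qed (use assms in simp)

lemma kappa_star_attained:
  assumes "finite V" and "k \<le> card V"
  obtains S where "S \<subseteq> V" "card S = k" "kappa_star V E k = kappa_star_S V E S"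
proof -
  obtain S where "S \<subseteq> V" "card S = k"
    using obtain_subset_with_card_n[OF assms(2)] by blast
  then have "{kappa_star_S V E S | S. S \<subseteq> V \<and> card S = k} \<noteq> {}"
    by blast
  from Min_in[OF finite_kappa_star_S_values[OF assms(1)] this] show thesis
    using that unfolding kappa_star_def by blast
qed

lemma kappa_star_le:
  assumes "finite V" and "S \<subseteq> V"
  shows "kappa_star V E (card S) \<le> kappa_star_S V E S"
  unfolding kappa_star_def using assms(2) by (intro Min_le finite_kappa_star_S_values[OF assms(1)]) blast

lemma card_ge_2_obtain_distinct:
  assumes "2 \<le> card S"
  obtains x y where "x \<in> S" "y \<in> S" "x \<noteq> y"
proof -
  obtain P where "P \<subseteq> S" "card P = 2"
    using obtain_subset_with_card_n[OF assms] by blast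
  then show thesis
    using that by (auto simp: card_2_iff)
qed

lemma obtain_superset_with_card_n:
  assumes "finite V" and "S \<subseteq> V" and "card S \<le> n" and "n \<le> card V"
  obtains S' where "S \<subseteq> S'" "S' \<subseteq> V" "card S' = n"
proof -
  have "finite S"
    using assms(1,2) by (rule finite_subset[rotated])
  then have "n - card S \<le> card (V - S)"
    using card_Diff_subset[OF _ assms(2)] assms(4) by simp
  then obtain X where "X \<subseteq> V - S" "card X = n - card S" "finite X"
    by (rule obtain_subset_with_card_n)
  moreover have "card (S \<union> X) = card S + card X"
    using \<open>finite S\<close> \<open>finite X\<close> \<open>X \<subseteq> V - S\<close> by (intro card_Un_disjoint) auto
  ultimately show thesis
    using that[of "S \<union> X"] assms(2,3) by auto
qed

theorem corollary2p3:
  fixes V :: "'a set" and E :: "'a set set" and k l :: nat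
  assumes "simple_graph V E" and "graph_connected V E"
    and "2 \<le> k" and "k \<le> l" and "l \<le> card V"
  shows "kappa_star V E k \<ge> kappa_star V E l"
proof -
  have "finite V"
    using assms(1) unfolding simple_graph_def by blast
  obtain S where S: "S \<subseteq> V" "card S = k" "kappa_star V E k = kappa_star_S V E S"
    using kappa_star_attained[OF \<open>finite V\<close>, of k E] assms(4,5) by auto
  obtain x y where "x \<in> S" "y \<in> S" "x \<noteq> y"
    using assms(3) unfolding S(2)[symmetric] by (rule card_ge_2_obtain_distinct)
  obtain S' where S': "S \<subseteq> S'" "S' \<subseteq> V" "card S' = l"
    by (rule obtain_superset_with_card_n[OF \<open>finite V\<close> S(1) _ assms(5)]) (use S(2) assms(4) in simp)
  have "kappa_star V E l \<le> kappa_star_S V E S'"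
    using kappa_star_le[OF \<open>finite V\<close> S'(2), of E] S'(3) by simp
  also have "\<dots> \<le> kappa_star_S V E S"
    using kappa_star_S_antimono[OF assms(1) \<open>x \<in> S\<close> \<open>y \<in> S\<close> \<open>x \<noteq> y\<close> S'(1)]
      finite_subset[OF S'(2) \<open>finite V\<close>] .
  finally show ?thesis
    using S(3) by simp
qed

end
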